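(* Let $T$ be a measure-preserving transformation of a finite measure space $(X,\mu)$ and let $\{K_n\}_{n\ge1}$ be measurable subsets of $X$ with $\sum_{n=1}^\infty\mu(X\setminus K_n)<\infty$. Then there is a full measure subset $\Omega\subseteq X$ such that for any $x,y\in\Omega$ there exist $n\in\mathbb N$ and a sequence $n_k\to\infty$ with $T^{n_k}(x)\in K_n$ and $T^{n_k}(y)\in K_n$ for every $k$. *)

theory Defs
  imports "HOL-Analysis.Analysis"
begin

definition mpt :: "'a measure \<Rightarrow> ('a \<Rightarrow> 'a) \<Rightarrow> bool" where
  "mpt M T \<longleftrightarrow> T \<in> measurable M M \<and>
     (\<forall>A\<in>sets M. emeasure M (T -` A \<inter> space M) = emeasure M A)"

end

theory Submission
  imports Defs
begin

text \<open>By the maximal ergodic inequality, the set of points whose orbit spends more than a third of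
  some initial time interval \<open>[0, N)\<close> outside \<open>K\<^sub>n\<close> has measure at most \<open>3 \<mu>(X - K\<^sub>n)\<close>.
  These bounds are summable, so by Borel--Cantelli almost every orbit, for all large \<open>n\<close>, spends at
  most a third of every initial interval outside \<open>K\<^sub>n\<close>. For two such points and a common such
  \<open>n\<close>, the times at which both orbits lie in \<open>K\<^sub>n\<close> then have lower density at least \<open>1/3\<close>,
  so there are infinitely many of them.\<close>

lemma measurable_funpow: "T \<in> measurable M M \<Longrightarrow> T ^^ k \<in> measurable M M"
  by (induction k) (auto intro: measurable_comp simp: measurable_ident)

lemma mpt_measurable: "mpt M T \<Longrightarrow> T \<in> measurable M M"
  unfolding mpt_def by simp

lemma mpt_distr_eq: "mpt M T \<Longrightarrow> distr M M T = M"
  by (rule measure_eqI) (auto simp: mpt_def emeasure_distr)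

lemma mpt_integrable_comp:
  fixes f :: "'a \<Rightarrow> real"
  assumes "mpt M T" "integrable M f"
  shows "integrable M (\<lambda>x. f (T x))"
  using assms by (metis integrable_distr mpt_distr_eq mpt_measurable)

lemma mpt_integral_comp:
  fixes f :: "'a \<Rightarrow> real"
  assumes "mpt M T" "f \<in> borel_measurable M"
  shows "(\<integral>x. f (T x) \<partial>M) = integral\<^sup>L M f"
  using integral_distr[OF mpt_measurable[OF assms(1)] assms(2)] mpt_distr_eq[OF assms(1)] by simp

definition birkhoff_sum :: "('a \<Rightarrow> 'a) \<Rightarrow> ('a \<Rightarrow> real) \<Rightarrow> nat \<Rightarrow> 'a \<Rightarrow> real" where
  "birkhoff_sum T f N x = (\<Sum>k<N. f ((T ^^ k) x))"

lemma birkhoff_sum_0 [simp]: "birkhoff_sum T f 0 x = 0"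
  by (simp add: birkhoff_sum_def)

lemma birkhoff_sum_Suc: "birkhoff_sum T f (Suc N) x = f x + birkhoff_sum T f N (T x)"
  unfolding birkhoff_sum_def
  by (subst sum.lessThan_Suc_shift) (simp add: funpow_Suc_right del: funpow.simps)

lemma birkhoff_sum_measurable [measurable]:
  assumes [measurable]: "T \<in> measurable M M" "f \<in> borel_measurable M"
  shows "birkhoff_sum T f N \<in> borel_measurable M"
proof -
  have [measurable]: "T ^^ k \<in> measurable M M" for k by (rule measurable_funpow) fact
  show ?thesis unfolding birkhoff_sum_def by measurable
qed

lemma integrable_birkhoff_sum:
  assumes "mpt M T" "integrable M f"
  shows "integrable M (birkhoff_sum T f N)"
proof -
  have "integrable M (\<lambda>x. f ((T ^^ k) x))" for k
  proof (induction k)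
    case (Suc k)
    then show ?case
      using mpt_integrable_comp[OF assms(1) Suc] by (simp add: funpow_Suc_right del: funpow.simps)
  qed (use assms(2) in simp)
  then show ?thesis unfolding birkhoff_sum_def by auto
qed

text \<open>Garsia's proof: the running maximum \<open>m\<close> of \<open>S\<^sub>0 = 0, S\<^sub>1, \<dots>, S\<^sub>L\<close> satisfies
  \<open>m - m \<circ> T \<le> f\<close> where \<open>m > 0\<close> and \<open>m - m \<circ> T \<le> 0\<close> elsewhere, and \<open>m - m \<circ> T\<close> has integral zero.\<close>

lemma maximal_ergodic_inequality:
  fixes f :: "'a \<Rightarrow> real"
  assumes mpt: "mpt M T" and f: "integrable M f"
  shows "0 \<le> (\<integral>x\<in>{x\<in>space M. \<exists>N\<le>L. 0 < birkhoff_sum T f N x}. f x \<partial>M)"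
proof -
  note [measurable] = mpt_measurable[OF mpt] borel_measurable_integrable[OF f]
  let ?S = "birkhoff_sum T f"
  define m where "m x = Max ((\<lambda>N. ?S N x) ` {..L})" for x
  define P where "P = {x\<in>space M. \<exists>N\<le>L. 0 < ?S N x}"
  have m_ge: "N \<le> L \<Longrightarrow> ?S N x \<le> m x" for N x
    unfolding m_def by (rule Max_ge) auto
  have m_attained: "\<exists>N\<le>L. m x = ?S N x" for x
  proof -
    have "m x \<in> (\<lambda>N. ?S N x) ` {..L}" unfolding m_def by (rule Max_in) auto
    then show ?thesis by auto
  qed
  have m_nonneg: "0 \<le> m x" for x
    using m_ge[of 0 x] by simp
  have P_iff: "x \<in> P \<longleftrightarrow> x \<in> space M \<and> 0 < m x" for x
    unfolding P_def using m_ge m_attained by (auto intro: less_le_trans) (metis)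
  have [measurable]: "m \<in> borel_measurable M"
    unfolding m_def by measurable
  have P_sets [measurable]: "P \<in> sets M"
    unfolding P_def by measurable
  have m_integrable: "integrable M m"
  proof (rule Bochner_Integration.integrable_bound)
    show "integrable M (\<lambda>x. \<Sum>N\<le>L. \<bar>?S N x\<bar>)"
      using integrable_birkhoff_sum[OF mpt f] by auto
    have "norm (m x) \<le> (\<Sum>N\<le>L. \<bar>?S N x\<bar>)" for x
      using m_attained[of x] by (auto intro!: member_le_sum)
    then show "AE x in M. norm (m x) \<le> norm (\<Sum>N\<le>L. \<bar>?S N x\<bar>)"
      by (auto intro: order_trans)
  qed simp
  have mT_integrable: "integrable M (\<lambda>x. m (T x))"
    by (rule mpt_integrable_comp[OF mpt m_integrable])
  have descent: "m x - m (T x) \<le> indicator P x * f x" if "x \<in> space M" for x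
  proof (cases "0 < m x")
    case True
    then obtain N where N: "N \<le> L" "m x = ?S N x" and "N \<noteq> 0"
      using m_attained by fastforce
    then obtain N' where N': "N = Suc N'" by (cases N) auto
    have "m x = f x + ?S N' (T x)" using N N' by (simp add: birkhoff_sum_Suc)
    also have "\<dots> \<le> f x + m (T x)" using m_ge[of N' "T x"] N N' by simp
    finally show ?thesis using True that P_iff by simp
  next
    case False
    then show ?thesis using m_nonneg[of x] m_nonneg[of "T x"] P_iff by simp
  qed
  have "0 = (\<integral>x. m x \<partial>M) - (\<integral>x. m (T x) \<partial>M)"
    using mpt_integral_comp[OF mpt, of m] by simp
  also have "\<dots> = (\<integral>x. m x - m (T x) \<partial>M)"
    using m_integrable mT_integrable by simp
  also have "\<dots> \<le> (\<integral>x. indicator P x * f x \<partial>M)"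
    using m_integrable mT_integrable descent integrable_real_mult_indicator[OF P_sets f]
    by (intro integral_mono_AE) (auto simp: mult.commute)
  finally show ?thesis
    by (simp add: P_def set_lebesgue_integral_def)
qed

lemma birkhoff_sum_indicator:
  "birkhoff_sum T (indicator B) N x = real (card ({..<N} \<inter> {k. (T ^^ k) x \<in> B}))"
  by (simp add: birkhoff_sum_def indicator_def sum.If_cases)

lemma measure_frequent_visits_le:
  assumes "finite_measure M" and mpt: "mpt M T" and B [measurable]: "B \<in> sets M" and "0 < c"
  shows "c * measure M {x\<in>space M. \<exists>N. c * real N < birkhoff_sum T (indicator B) N x}
           \<le> measure M B"
proof -
  interpret finite_measure M by fact
  note [measurable] = mpt_measurable[OF mpt]
  define f where "f x = indicator B x - c" for x :: 'a
  have f_integrable: "integrable M f"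
    unfolding f_def by (auto intro!: integrable_real_indicator simp: less_top[symmetric])
  have sum_f: "birkhoff_sum T f N x = birkhoff_sum T (indicator B) N x - c * real N" for N x
    by (simp add: birkhoff_sum_def f_def sum_subtractf)
  define P where "P L = {x\<in>space M. \<exists>N\<le>L. 0 < birkhoff_sum T f N x}" for L
  have P_sets [measurable]: "P L \<in> sets M" for L
    unfolding P_def f_def by measurable
  have "c * measure M (P L) \<le> measure M B" for L
  proof -
    have "0 \<le> (\<integral>x\<in>P L. f x \<partial>M)"
      unfolding P_def by (rule maximal_ergodic_inequality[OF mpt f_integrable])
    also have "\<dots> = (\<integral>x. indicator (P L \<inter> B) x - c * indicator (P L) x \<partial>M)"
      unfolding set_lebesgue_integral_def
      by (intro Bochner_Integration.integral_cong) (auto simp: f_def indicator_def)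
    also have "\<dots> = measure M (P L \<inter> B) - c * measure M (P L)"
      by (subst Bochner_Integration.integral_diff)
         (auto intro!: integrable_real_indicator simp: less_top[symmetric])
    finally have "c * measure M (P L) \<le> measure M (P L \<inter> B)" by simp
    also have "\<dots> \<le> measure M B" by (rule finite_measure_mono) auto
    finally show ?thesis .
  qed
  moreover have "(\<lambda>L. c * measure M (P L)) \<longlonglongrightarrow> c * measure M (\<Union>L. P L)"
  proof (intro tendsto_mult_left finite_Lim_measure_incseq)
    show "incseq P"
      unfolding incseq_def P_def by (blast intro: order_trans)
  qed auto
  ultimately have "c * measure M (\<Union>L. P L) \<le> measure M B"
    by (intro LIMSEQ_le_const2) auto
  moreover have "(\<Union>L. P L) = {x\<in>space M. \<exists>N. c * real N < birkhoff_sum T (indicator B) N x}"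
    unfolding P_def sum_f by auto
  ultimately show ?thesis by simp
qed

lemma infinite_Compl_Un_if_sparse:
  fixes X Y :: "nat set"
  assumes X: "\<And>N. real (card ({..<N} \<inter> X)) \<le> c * real N"
    and Y: "\<And>N. real (card ({..<N} \<inter> Y)) \<le> d * real N"
    and "c + d < 1"
  shows "infinite (- (X \<union> Y))"
proof
  assume finite: "finite (- (X \<union> Y))"
  obtain N :: nat where N: "real (card (- (X \<union> Y))) < real N * (1 - c - d)"
    using ex_less_of_nat_mult[of "1 - c - d"] \<open>c + d < 1\<close> by auto
  have "N = card {..<N}" by simp
  also have "\<dots> \<le> card (({..<N} \<inter> X) \<union> ({..<N} \<inter> Y) \<union> - (X \<union> Y))"
    by (rule card_mono) (use finite in auto)
  also have "\<dots> \<le> card ({..<N} \<inter> X) + card ({..<N} \<inter> Y) + card (- (X \<union> Y))"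
    by (meson card_Un_le add_le_mono1 order_trans)
  finally have "real N \<le> c * real N + d * real N + real (card (- (X \<union> Y)))"
    using X[of N] Y[of N] by linarith
  with N show False by (simp add: algebra_simps)
qed

lemma infinitely_many_common_visits_if_rarely_outside:
  assumes T: "T \<in> measurable M M" and "x \<in> space M" "y \<in> space M"
    and x: "\<And>N. birkhoff_sum T (indicator (space M - K)) N x \<le> c * real N"
    and y: "\<And>N. birkhoff_sum T (indicator (space M - K)) N y \<le> d * real N"
    and "c + d < 1"
  shows "\<exists>r::nat \<Rightarrow> nat. filterlim r at_top sequentially \<and>
           (\<forall>k. (T ^^ r k) x \<in> K \<and> (T ^^ r k) y \<in> K)"
proof -
  let ?outside = "\<lambda>z. {k. (T ^^ k) z \<in> space M - K}"
  have "infinite (- (?outside x \<union> ?outside y))"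
    using x y \<open>c + d < 1\<close> unfolding birkhoff_sum_indicator by (rule infinite_Compl_Un_if_sparse)
  then obtain r :: "nat \<Rightarrow> nat" where r: "strict_mono r" "\<forall>k. r k \<in> - (?outside x \<union> ?outside y)"
    using infinite_enumerate by blast
  have "(T ^^ k) z \<in> space M" if "z \<in> space M" for k z
    using measurable_space[OF measurable_funpow[OF T] that] .
  then have "\<forall>k. (T ^^ r k) x \<in> K \<and> (T ^^ r k) y \<in> K"
    using r(2) \<open>x \<in> space M\<close> \<open>y \<in> space M\<close> by auto
  with filterlim_subseq[OF r(1)] show ?thesis by blast
qed

lemma AE_eventually_sparse_visits:
  assumes "finite_measure M" and mpt: "mpt M T" and B [measurable]: "\<And>n. B n \<in> sets M"
    and summable: "summable (\<lambda>n. measure M (B n))" and "0 < c"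
  shows "AE x in M. \<forall>\<^sub>F n in sequentially. \<forall>N. birkhoff_sum T (indicator (B n)) N x \<le> c * real N"
proof -
  interpret finite_measure M by fact
  note [measurable] = mpt_measurable[OF mpt]
  define A where "A n = {x\<in>space M. \<exists>N. c * real N < birkhoff_sum T (indicator (B n)) N x}" for n
  have [measurable]: "A n \<in> sets M" for n
    unfolding A_def by measurable
  have A_le: "measure M (A n) \<le> measure M (B n) / c" for n
    using measure_frequent_visits_le[OF \<open>finite_measure M\<close> mpt B \<open>0 < c\<close>]
    by (simp add: A_def field_simps \<open>0 < c\<close>)
  have "summable (\<lambda>n. measure M (A n))"
    by (rule summable_comparison_test'[OF summable_divide[OF summable, of c]]) (simp add: A_le)
  then have "AE x in M. \<forall>\<^sub>F n in sequentially. x \<in> space M - A n"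
    by (intro borel_cantelli_AE1) (auto simp: less_top[symmetric])
  then show ?thesis
  proof (rule AE_mp, intro AE_I2 impI)
    fix x assume "\<forall>\<^sub>F n in sequentially. x \<in> space M - A n"
    then show "\<forall>\<^sub>F n in sequentially. \<forall>N. birkhoff_sum T (indicator (B n)) N x \<le> c * real N"
      by (rule eventually_mono) (auto simp: A_def not_less)
  qed
qed

theorem mainTheorem10:
  fixes M :: "'a measure" and T :: "'a \<Rightarrow> 'a" and K :: "nat \<Rightarrow> 'a set"
  assumes "finite_measure M"
    and "mpt M T"
    and "\<And>n. n \<ge> 1 \<Longrightarrow> K n \<in> sets M"
    and "(\<Sum>n. emeasure M (space M - K (Suc n))) < \<infinity>"
  shows "\<exists>\<Omega>. \<Omega> \<in> sets M \<and> emeasure M (space M - \<Omega>) = 0 \<and>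
           (\<forall>x\<in>\<Omega>. \<forall>y\<in>\<Omega>. \<exists>n::nat. n \<ge> 1 \<and>
              (\<exists>nk :: nat \<Rightarrow> nat. filterlim nk at_top sequentially \<and>
                 (\<forall>k. (T ^^ nk k) x \<in> K n \<and> (T ^^ nk k) y \<in> K n)))"
proof -
  interpret finite_measure M by fact
  let ?B = "\<lambda>n. space M - K (Suc n)"
  have "summable (\<lambda>n. measure M (?B n))"
    using assms(4) by (intro summable_suminf_not_top) (auto simp: emeasure_eq_measure)
  then have "AE x in M. \<forall>\<^sub>F n in sequentially.
      \<forall>N. birkhoff_sum T (indicator (?B n)) N x \<le> 1/3 * real N"
    using assms(3) by (intro AE_eventually_sparse_visits[OF assms(1,2)]) auto
  then obtain Z where sparse: "\<And>x. x \<in> space M - Z \<Longrightarrow>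
      \<forall>\<^sub>F n in sequentially. \<forall>N. birkhoff_sum T (indicator (?B n)) N x \<le> 1/3 * real N"
    and Z: "Z \<in> null_sets M"
    by (elim AE_E3) blast
  have "\<exists>n\<ge>1. \<exists>nk :: nat \<Rightarrow> nat. filterlim nk at_top sequentially \<and>
          (\<forall>k. (T ^^ nk k) x \<in> K n \<and> (T ^^ nk k) y \<in> K n)"
    if x: "x \<in> space M - Z" and y: "y \<in> space M - Z" for x y
  proof -
    obtain n where "\<forall>N. birkhoff_sum T (indicator (?B n)) N x \<le> 1/3 * real N"
      and "\<forall>N. birkhoff_sum T (indicator (?B n)) N y \<le> 1/3 * real N"
      using eventually_happens[OF eventually_conj[OF sparse[OF x] sparse[OF y]]] by auto
    then show ?thesis
      using infinitely_many_common_visits_if_rarely_outside[OF mpt_measurable[OF assms(2)],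
          of x y "K (Suc n)" "1/3" "1/3"] x y
      by (intro exI[of _ "Suc n"]) auto
  qed
  moreover have "space M - (space M - Z) = Z"
    using null_sets.sets_into_space[OF Z] by blast
  ultimately show ?thesis
    using Z by (intro exI[of _ "space M - Z"]) auto
qed

end
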